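(* Let $n>0$ be a real number and let $\lambda=(\lambda_1,\dots,\lambda_\ell)$ and $\mu=(\mu_1,\dots,\mu_{\ell'})$ be finite weakly decreasing sequences of positive real numbers, each summing to $n$. If the multisets $\{\!\{\lambda_i\lambda_j : 1\le i<j\le \ell\}\!\}$ and $\{\!\{\mu_i\mu_j : 1\le i<j\le \ell'\}\!\}$ are equal, then $\lambda=\mu$ (that is, $\ell=\ell'$ and $\lambda_i=\mu_i$ for all $i$).
   Context: Multisets are compared with multiplicities. *)

theory Defs
  imports Main "HOL-Library.Multiset" Complex_Main
begin

definition pair_products :: "real list \<Rightarrow> real multiset" where
  "pair_products xs = mset [xs ! i * xs ! j. i \<leftarrow> [0..<length xs], j \<leftarrow> [0..<length xs], i < j]"

end

theory Submission
  imports Defs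
begin

text \<open>
  Let p(N) be the N-th power sum of a list. Since the N-th powers of the pairwise products
  sum to (p(N)^2 - p(2N)) / 2, equal sums and equal multisets of pairwise products force
  p(2^k) to agree for every k. These power sums determine a multiset of positive reals:
  if M is the largest element, p(N) / M^N tends to the multiplicity of M, so both multisets
  contain M equally often, and M can be removed.
\<close>

lemma pair_products_Cons:
  "pair_products (x # xs) = image_mset ((*) x) (mset xs) + pair_products xs"
proof -
  have indices: "[0..<length (x # xs)] = 0 # map Suc [0..<length xs]"
    by (simp only: length_Cons upt_conv_Cons[OF zero_less_Suc] map_Suc_upt)
  have "mset xs = mset (map ((!) xs) [0..<length xs])"
    by (simp add: map_nth)
  then show ?thesis
    unfolding pair_products_def indices
    by (simp add: comp_def multiset.map_comp) (simp only: nth_Cons_Suc)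
qed

lemma pair_products_power_sum:
  "2 * (\<Sum>z\<in>#pair_products xs. z ^ N) =
     (\<Sum>x\<in>#mset xs. x ^ N)\<^sup>2 - (\<Sum>x\<in>#mset xs. x ^ (2 * N))"
proof (induction xs)
  case Nil
  then show ?case by (simp add: pair_products_def)
next
  case (Cons x xs)
  have "(\<Sum>z\<in>#image_mset ((*) x) (mset xs). z ^ N) = x ^ N * (\<Sum>y\<in>#mset xs. y ^ N)"
    by (induction xs) (simp_all add: algebra_simps power_mult_distrib)
  then show ?case
    using Cons.IH by (simp add: pair_products_Cons power_mult power2_eq_square algebra_simps)
qed

lemma power_sums_eq_if_pair_products_eq:
  fixes xs ys :: "real list"
  assumes "sum_list xs = sum_list ys" and "pair_products xs = pair_products ys"
  shows "(\<Sum>x\<in>#mset xs. x ^ 2 ^ k) = (\<Sum>y\<in>#mset ys. y ^ 2 ^ k)"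
proof (induction k)
  case 0
  then show ?case using assms(1) by (simp add: sum_mset_sum_list)
next
  case (Suc k)
  then show ?case
    using pair_products_power_sum[of "2 ^ k" xs] pair_products_power_sum[of "2 ^ k" ys] assms(2)
    by (simp add: power_Suc2)
qed

lemma power_sum_over_power_tendsto_count:
  fixes A :: "real multiset"
  assumes "\<forall>x\<in>#A. 0 \<le> x \<and> x \<le> M" and "0 < M"
  shows "(\<lambda>N. (\<Sum>x\<in>#A. x ^ N) / M ^ N) \<longlonglongrightarrow> real (count A M)"
  using assms(1)
proof (induction A)
  case empty
  then show ?case by simp
next
  case (add x A)
  have "(\<lambda>N. (x / M) ^ N) \<longlonglongrightarrow> (if x = M then 1 else 0)"
  proof (cases "x = M")
    case False
    with add.prems \<open>0 < M\<close> have "norm (x / M) < 1" by auto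
    then have "(\<lambda>N. (x / M) ^ N) \<longlonglongrightarrow> 0" by (rule LIMSEQ_power_zero)
    then show ?thesis using False by simp
  qed (use \<open>0 < M\<close> in simp)
  moreover have "(\<lambda>N. (\<Sum>y\<in>#A. y ^ N) / M ^ N) \<longlonglongrightarrow> real (count A M)"
    using add by simp
  ultimately have "(\<lambda>N. (x / M) ^ N + (\<Sum>y\<in>#A. y ^ N) / M ^ N)
      \<longlonglongrightarrow> (if x = M then 1 else 0) + real (count A M)"
    by (rule tendsto_add)
  moreover have "(\<lambda>N. (\<Sum>y\<in>#add_mset x A. y ^ N) / M ^ N)
      = (\<lambda>N. (x / M) ^ N + (\<Sum>y\<in>#A. y ^ N) / M ^ N)"
    by (simp add: power_divide add_divide_distrib)
  moreover have "real (count (add_mset x A) M) = (if x = M then 1 else 0) + real (count A M)"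
    by simp
  ultimately show ?case by (simp only:)
qed

lemma count_upper_bound_eq_if_power_sums_eq:
  fixes A B :: "real multiset"
  assumes "\<forall>x\<in>#A. 0 \<le> x \<and> x \<le> M" and "\<forall>x\<in>#B. 0 \<le> x \<and> x \<le> M" and "0 < M"
    and "\<forall>k. (\<Sum>x\<in>#A. x ^ 2 ^ k) = (\<Sum>x\<in>#B. x ^ 2 ^ k)"
  shows "count A M = count B M"
proof -
  have "strict_mono (\<lambda>k. 2 ^ k :: nat)"
    by (simp add: strict_mono_def)
  then have "(\<lambda>k. (\<Sum>x\<in>#A. x ^ 2 ^ k) / M ^ 2 ^ k) \<longlonglongrightarrow> real (count A M)"
    and "(\<lambda>k. (\<Sum>x\<in>#B. x ^ 2 ^ k) / M ^ 2 ^ k) \<longlonglongrightarrow> real (count B M)"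
    using LIMSEQ_subseq_LIMSEQ[OF power_sum_over_power_tendsto_count] assms(1-3)
    by (auto simp: comp_def)
  with assms(4) show ?thesis
    using LIMSEQ_unique by fastforce
qed

lemma mset_eq_if_power_sums_eq:
  fixes A B :: "real multiset"
  assumes "\<forall>x\<in>#A. 0 < x" and "\<forall>x\<in>#B. 0 < x"
    and "\<forall>k. (\<Sum>x\<in>#A. x ^ 2 ^ k) = (\<Sum>x\<in>#B. x ^ 2 ^ k)"
  shows "A = B"
  using assms
proof (induction "size A + size B" arbitrary: A B rule: less_induct)
  case less
  show ?case
  proof (cases "A = {#} \<and> B = {#}")
    case False
    define M where "M = Max (set_mset A \<union> set_mset B)"
    have M_in: "M \<in># A \<or> M \<in># B"
      unfolding M_def using False Max_in[of "set_mset A \<union> set_mset B"] by auto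
    have "\<forall>x\<in>#A. 0 \<le> x \<and> x \<le> M" and "\<forall>x\<in>#B. 0 \<le> x \<and> x \<le> M"
      using less.prems(1,2) by (auto simp: M_def less_imp_le)
    moreover have "0 < M" using M_in less.prems(1,2) by auto
    ultimately have "count A M = count B M"
      using count_upper_bound_eq_if_power_sums_eq less.prems(3) by blast
    with M_in have "M \<in># A" and "M \<in># B"
      by (auto simp: count_greater_zero_iff[symmetric] simp del: count_greater_zero_iff)
    then obtain A' B' where A: "A = add_mset M A'" and B: "B = add_mset M B'"
      by (metis mset_add)
    have "A' = B'"
      by (rule less.hyps) (use less.prems in \<open>auto simp: A B\<close>)
    then show ?thesis by (simp add: A B)
  qed simp
qed

lemma sorted_desc_eq_if_mset_eq:
  fixes xs ys :: "'a::linorder list"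
  assumes "sorted_wrt (\<ge>) xs" and "sorted_wrt (\<ge>) ys" and "mset xs = mset ys"
  shows "xs = ys"
proof -
  have sorted_rev: "sorted (rev xs)" "sorted (rev ys)"
    using assms(1,2) by (simp_all add: sorted_wrt_rev)
  have "mset (rev xs) = mset (rev ys)"
    using assms(3) by simp
  then have "sort (rev ys) = rev xs"
    using sorted_rev(1) by (rule properties_for_sort)
  moreover have "sort (rev ys) = rev ys"
    using sorted_rev(2) by (rule sorted_sort_id)
  ultimately show ?thesis by simp
qed

theorem mainTheorem4:
  fixes n :: real and lam mu :: "real list"
  assumes "n > 0"
    and "sorted_wrt (\<ge>) lam" and "sorted_wrt (\<ge>) mu"
    and "\<forall>x\<in>set lam. x > 0" and "\<forall>x\<in>set mu. x > 0"
    and "sum_list lam = n" and "sum_list mu = n"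
    and "pair_products lam = pair_products mu"
  shows "lam = mu"
proof (rule sorted_desc_eq_if_mset_eq)
  show "mset lam = mset mu"
  proof (rule mset_eq_if_power_sums_eq)
    show "\<forall>x\<in>#mset lam. 0 < x" and "\<forall>x\<in>#mset mu. 0 < x"
      using assms(4,5) by auto
    show "\<forall>k. (\<Sum>x\<in>#mset lam. x ^ 2 ^ k) = (\<Sum>x\<in>#mset mu. x ^ 2 ^ k)"
      using power_sums_eq_if_pair_products_eq assms(6-8) by simp
  qed
qed (use assms(2,3) in simp_all)

end
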